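(* Consider the controlled SEIR system described in the context. Then: (1) For every $x_0=(S_0,E_0,I_0)\in\Pi$ and every $u\in\mathcal{U}$, the solution $x(\cdot;x_0,u)=(S,E,I)$ satisfies $\lim_{t\to\infty}E(t)=\lim_{t\to\infty}I(t)=0$ and $\lim_{t\to\infty}(S(t)+R(t))=1$, where $R(t):=1-S(t)-E(t)-I(t)$. (2) For every $x_0\in\mathcal{A}$ there exists $u\in\mathcal{U}$ such that $\lim_{t\to\infty}E(t)=\lim_{t\to\infty}I(t)=0$ and $I(t)\le I_{\max}$ for all $t\ge 0$. (3) For every $x_0\in\mathcal{M}$ and every $u\in\mathcal{U}$, $\lim_{t\to\infty}E(t)=\lim_{t\to\infty}I(t)=0$ and $I(t)\le I_{\max}$ for all $t\ge 0$.
   Context: Fix parameters $\eta>0$, $0<\beta_{\min}\le\beta_{\mathrm{nom}}$, $0<\gamma_{\mathrm{nom}}\le\gamma_{\max}<\infty$ and $I_{\max}\in(0,1)$. Let $U:=[\beta_{\min},\beta_{\mathrm{nom}}]\times[\gamma_{\mathrm{nom}},\gamma_{\max}]$ and let $\mathcal{U}$ be the set of measurable, locally integrable functions $u=(\beta,\gamma):[0,\infty)\to U$. Let $\Pi:=\{(S,E,I)\in[0,1]^3: S+E+I\le 1\}$. For $x_0=(S_0,E_0,I_0)\in\Pi$ and $u\in\mathcal{U}$, $x(\cdot;x_0,u)=(S,E,I)$ denotes the unique (absolutely continuous) solution of $\dot S=-\beta(t)SI$, $\dot E=\beta(t)SI-\eta E$, $\dot I=\eta E-\gamma(t)I$ with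 $x(0)=x_0$; it stays in $\Pi$. The removed compartment is $R(t)=1-S(t)-E(t)-I(t)$, which satisfies $\dot R=\gamma(t)I$. Let $G_\Pi:=\{(S,E,I)\in\Pi: I\le I_{\max}\}$. The admissible set is $\mathcal{A}:=\{x_0\in G_\Pi:\exists u\in\mathcal{U}\text{ with } x(t;x_0,u)\in G_\Pi\ \forall t\ge 0\}$, and the maximal robust positively invariant set is $\mathcal{M}:=\{x_0\in G_\Pi: x(t;x_0,u)\in G_\Pi\ \forall t\ge0,\ \forall u\in\mathcal{U}\}$. *)

theory Defs
  imports "HOL-Analysis.Analysis"
begin

definition PiSet :: "(real \<times> real \<times> real) set" where
  "PiSet = {(S,E,I). 0 \<le> S \<and> S \<le> 1 \<and> 0 \<le> E \<and> E \<le> 1 \<and> 0 \<le> I \<and> I \<le> 1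
                     \<and> S + E + I \<le> 1}"

text \<open>Admissible controls u = (beta, gamma): measurable, values in U on [0,inf).
  (Bounded measurable functions are automatically locally integrable.)\<close>
definition controls :: "real \<Rightarrow> real \<Rightarrow> real \<Rightarrow> real \<Rightarrow> ((real \<Rightarrow> real) \<times> (real \<Rightarrow> real)) set" where
  "controls bmin bnom gnom gmax =
     {(\<beta>, \<gamma>). \<beta> \<in> borel_measurable lborel \<and> \<gamma> \<in> borel_measurable lborel \<and>
        (\<forall>t\<ge>0. bmin \<le> \<beta> t \<and> \<beta> t \<le> bnom \<and> gnom \<le> \<gamma> t \<and> \<gamma> t \<le> gmax)}"

text \<open>(S,E,I) is an absolutely continuous (Caratheodory) solution on [0,inf) of the
  controlled SEIR system with initial value x0, written in integral form with
  Lebesgue-integrable integrands.\<close>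
definition seir_sol :: "real \<Rightarrow> (real \<Rightarrow> real) \<Rightarrow> (real \<Rightarrow> real) \<Rightarrow> real \<times> real \<times> real
    \<Rightarrow> (real \<Rightarrow> real) \<Rightarrow> (real \<Rightarrow> real) \<Rightarrow> (real \<Rightarrow> real) \<Rightarrow> bool" where
  "seir_sol \<eta> \<beta> \<gamma> x0 S E I \<longleftrightarrow>
     (S 0, E 0, I 0) = x0 \<and>
     (\<forall>t\<ge>0.
        (\<lambda>s. - \<beta> s * S s * I s) absolutely_integrable_on {0..t} \<and>
        ((\<lambda>s. - \<beta> s * S s * I s) has_integral (S t - S 0)) {0..t} \<and>
        (\<lambda>s. \<beta> s * S s * I s - \<eta> * E s) absolutely_integrable_on {0..t} \<and>
        ((\<lambda>s. \<beta> s * S s * I s - \<eta> * E s) has_integral (E t - E 0)) {0..t} \<and>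
        (\<lambda>s. \<eta> * E s - \<gamma> s * I s) absolutely_integrable_on {0..t} \<and>
        ((\<lambda>s. \<eta> * E s - \<gamma> s * I s) has_integral (I t - I 0)) {0..t})"

definition GPi :: "real \<Rightarrow> (real \<times> real \<times> real) set" where
  "GPi Imax = {(S,E,I) \<in> PiSet. I \<le> Imax}"

definition admissible_set :: "real \<Rightarrow> real \<Rightarrow> real \<Rightarrow> real \<Rightarrow> real \<Rightarrow> real
    \<Rightarrow> (real \<times> real \<times> real) set" where
  "admissible_set \<eta> bmin bnom gnom gmax Imax =
     {x0 \<in> GPi Imax. \<exists>(\<beta>,\<gamma>) \<in> controls bmin bnom gnom gmax.
        \<forall>S E I. seir_sol \<eta> \<beta> \<gamma> x0 S E I \<longrightarrow> (\<forall>t\<ge>0. (S t, E t, I t) \<in> GPi Imax)}"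

definition mrpi_set :: "real \<Rightarrow> real \<Rightarrow> real \<Rightarrow> real \<Rightarrow> real \<Rightarrow> real
    \<Rightarrow> (real \<times> real \<times> real) set" where
  "mrpi_set \<eta> bmin bnom gnom gmax Imax =
     {x0 \<in> GPi Imax. \<forall>(\<beta>,\<gamma>) \<in> controls bmin bnom gnom gmax.
        \<forall>S E I. seir_sol \<eta> \<beta> \<gamma> x0 S E I \<longrightarrow> (\<forall>t\<ge>0. (S t, E t, I t) \<in> GPi Imax)}"

end

theory Submission
  imports Defs
begin

text \<open>Along every solution S + E and S + E + I are nonincreasing, with rates \<eta> E and \<gamma> I, and
  they are bounded below by 0, so \<eta> E and gnom I \<le> \<gamma> I have finite integrals over [0, \<infinity>).
  As E and I are nonnegative and Lipschitz (the vector field is bounded on the simplex),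
  Barbalat's argument gives E, I \<rightarrow> 0. For initial values in the admissible or the invariant
  set, the bound I \<le> Imax along the relevant trajectories holds by definition.\<close>

lemma has_integral_increment:
  fixes g F :: "real \<Rightarrow> real"
  assumes F: "\<forall>t\<ge>0. (g has_integral (F t - F 0)) {0..t}" and "0 \<le> s" "s \<le> t"
  shows "(g has_integral (F t - F s)) {s..t}"
proof -
  have "g integrable_on {0..t}"
    using F assms by (meson has_integral_integrable order_trans)
  then have "g integrable_on {s..t}"
    using integrable_subinterval_real[of g 0 t s t] assms by simp
  then obtain v where v: "(g has_integral v) {s..t}" by blast
  have "(g has_integral (F s - F 0) + v) {0..t}"
    using has_integral_combine[OF assms(2,3) _ v] F assms by simp
  moreover have "(g has_integral (F t - F 0)) {0..t}" using F assms by simp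
  ultimately have "F s - F 0 + v = F t - F 0" by (rule has_integral_unique)
  then have "v = F t - F s" by simp
  with v show ?thesis by simp
qed

lemma continuous_on_integral_equation:
  fixes g F :: "real \<Rightarrow> real"
  assumes F: "\<forall>t\<ge>0. (g has_integral (F t - F 0)) {0..t}"
  shows "continuous_on {0..T} F"
proof (cases "0 \<le> T")
  case True
  then have "continuous_on {0..T} (\<lambda>t. F 0 + integral {0..t} g)"
    using F by (intro continuous_intros indefinite_integral_continuous_1) blast
  then show ?thesis
  proof (rule continuous_on_eq)
    show "F 0 + integral {0..t} g = F t" if "t \<in> {0..T}" for t
      using integral_unique[of g "F t - F 0" "{0..t}"] F that by simp
  qed
qed simp

lemma lipschitz_on_integral_equation:
  fixes g F :: "real \<Rightarrow> real"
  assumes F: "\<forall>t\<ge>0. (g has_integral (F t - F 0)) {0..t}"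
    and g: "\<And>t. 0 \<le> t \<Longrightarrow> \<bar>g t\<bar> \<le> L" and "0 \<le> L"
  shows "L-lipschitz_on {0..} F"
proof -
  have increment: "dist (F s) (F t) \<le> L * dist s t" if "0 \<le> s" "s \<le> t" for s t
  proof -
    have "norm (F t - F s) \<le> L * (t - s)"
      using has_integral_bound_real[OF \<open>0 \<le> L\<close> finite.emptyI has_integral_increment[OF F that]]
        g that by simp
    then show ?thesis using that by (simp add: dist_real_def abs_minus_commute)
  qed
  show ?thesis
  proof (rule lipschitz_onI)
    fix x y :: real assume "x \<in> {0..}" "y \<in> {0..}"
    then show "dist (F x) (F y) \<le> L * dist x y"
      using increment[of x y] increment[of y x] by (cases "x \<le> y") (auto simp: dist_commute)
  qed fact
qed

lemma last_zero_before_negative: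
  fixes f :: "real \<Rightarrow> real"
  assumes f: "continuous_on {a..t} f" and "a \<le> t" "0 \<le> f a" "f t < 0"
  obtains s where "a \<le> s" "s < t" "f s = 0" "\<And>r. s < r \<Longrightarrow> r \<le> t \<Longrightarrow> f r < 0"
proof -
  define A where "A = {r \<in> {a..t}. 0 \<le> f r}"
  define s where "s = Sup A"
  have "closed A" unfolding A_def
    by (rule continuous_on_closed_Collect_le) (auto intro: f continuous_intros)
  moreover have "a \<in> A" "bdd_above A"
    using assms by (auto simp: A_def intro: bdd_aboveI[where M=t])
  ultimately have "s \<in> A" and upper: "\<And>r. r \<in> A \<Longrightarrow> r \<le> s"
    unfolding s_def using closed_contains_Sup cSup_upper by blast+
  then have s: "a \<le> s" "s \<le> t" "0 \<le> f s" by (auto simp: A_def)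
  with \<open>f t < 0\<close> have "s < t" by (auto simp: less_le)
  obtain z where z: "s \<le> z" "z \<le> t" "f z = 0"
    using IVT2'[of f t 0 s] s \<open>f t < 0\<close> continuous_on_subset[OF f, of "{s..t}"] by auto
  have "z \<in> A" using z s by (simp add: A_def)
  with upper z have "f s = 0" by (metis order_antisym)
  moreover have "f r < 0" if "s < r" "r \<le> t" for r
    using upper[of r] that s by (force simp: A_def)
  ultimately show ?thesis using that s \<open>s < t\<close> by blast
qed

text \<open>Integrate from the last zero of X before t.\<close>
lemma integral_equation_lower_bound:
  fixes g X :: "real \<Rightarrow> real"
  assumes X: "\<forall>t\<ge>0. (g has_integral (X t - X 0)) {0..t}"
    and "0 \<le> a" "a \<le> t" "0 \<le> X a" "0 \<le> L"
    and g: "\<And>r. a \<le> r \<Longrightarrow> r \<le> t \<Longrightarrow> X r \<le> 0 \<Longrightarrow> - L \<le> g r"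
  shows "- (L * (t - a)) \<le> X t"
proof (cases "0 \<le> X t")
  case True
  moreover have "0 \<le> L * (t - a)" using assms by simp
  ultimately show ?thesis by linarith
next
  case False
  have "continuous_on {a..t} X"
    using continuous_on_subset[OF continuous_on_integral_equation[OF X, of t]] \<open>0 \<le> a\<close> by auto
  then obtain s where s: "a \<le> s" "s < t" "X s = 0" "\<And>r. s < r \<Longrightarrow> r \<le> t \<Longrightarrow> X r < 0"
    using last_zero_before_negative[of a t X] False assms by (metis not_le)
  have "(- L) * (t - s) \<le> X t - X s"
  proof (rule has_integral_le[OF _ has_integral_increment[OF X]])
    show "((\<lambda>_. - L) has_integral (- L) * (t - s)) {s..t}"
      using has_integral_const_real[of "- L" s t] s by (simp add: mult.commute)
    show "- L \<le> g r" if "r \<in> {s..t}" for r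
      using g[of r] s that by (cases "r = s") (auto simp: less_imp_le)
  qed (use s \<open>0 \<le> a\<close> in auto)
  moreover have "L * (t - s) \<le> L * (t - a)" using s \<open>0 \<le> L\<close> by (simp add: mult_left_mono)
  ultimately show ?thesis using s by simp
qed

lemma nonpos_if_bounds_contract:
  fixes m :: "'a \<Rightarrow> real"
  assumes "bdd_above (m ` A)" and "q < 1"
    and contract: "\<And>M. 0 \<le> M \<Longrightarrow> \<forall>r\<in>A. m r \<le> M \<Longrightarrow> \<forall>r\<in>A. m r \<le> q * M"
  shows "\<forall>r\<in>A. m r \<le> 0"
proof -
  define M where "M = Sup (insert 0 (m ` A))"
  have "bdd_above (insert 0 (m ` A))" using assms(1) by simp
  then have "0 \<le> M" and bound: "\<forall>r\<in>A. m r \<le> M"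
    unfolding M_def by (auto intro: cSup_upper)
  then have "\<forall>r\<in>A. m r \<le> q * M" by (rule contract)
  then have "M \<le> max 0 (q * M)"
    unfolding M_def by (intro cSup_least) auto
  with \<open>0 \<le> M\<close> \<open>q < 1\<close> have "M \<le> 0"
    by (smt (verit, best) mult_le_cancel_right1)
  with bound show ?thesis by auto
qed

lemma atLeastAtMost_induct_steps:
  fixes P :: "real \<Rightarrow> bool"
  assumes "0 < h" "P 0"
    and step: "\<And>t. 0 \<le> t \<Longrightarrow> t \<le> T \<Longrightarrow> \<forall>r\<in>{0..t}. P r \<Longrightarrow> \<forall>r\<in>{0..min (t + h) T}. P r"
  shows "\<forall>r\<in>{0..T}. P r"
proof (cases "0 \<le> T")
  case True
  have "\<forall>r\<in>{0..min (real n * h) T}. P r" for n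
  proof (induction n)
    case 0
    then show ?case using \<open>P 0\<close> by auto
  next
    case (Suc n)
    have "min (real (Suc n) * h) T \<le> min (min (real n * h) T + h) T"
      using \<open>0 < h\<close> by (auto simp: min_def algebra_simps)
    moreover have "\<forall>r\<in>{0..min (min (real n * h) T + h) T}. P r"
      by (rule step) (use Suc \<open>0 < h\<close> True in auto)
    ultimately show ?case by auto
  qed
  moreover obtain n where "min (real n * h) T = T"
    using ex_less_of_nat_mult[OF \<open>0 < h\<close>] by (metis less_imp_le min.absorb2)
  ultimately show ?thesis by metis
qed simp

lemma mult_ge_neg_if_bounded:
  fixes x y M C :: real
  assumes "0 \<le> M" "- M \<le> x" "- M \<le> y" "\<bar>x\<bar> \<le> C" "\<bar>y\<bar> \<le> C"
  shows "- (M * C) \<le> x * y"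
proof (cases "0 \<le> x \<and> 0 \<le> y \<or> x \<le> 0 \<and> y \<le> 0")
  case True
  then have "0 \<le> x * y" by (auto intro: mult_nonneg_nonneg mult_nonpos_nonpos)
  moreover have "0 \<le> M * C" using assms by simp
  ultimately show ?thesis by linarith
next
  case False
  then have "\<bar>x * y\<bar> \<le> M * C \<or> \<bar>x * y\<bar> \<le> C * M"
    unfolding abs_mult using assms by (auto intro!: mult_mono)
  then show ?thesis by (auto simp: mult.commute)
qed

lemma seir_field_quasi_positive:
  fixes b g s e i M C B K \<eta> :: real
  assumes b: "0 \<le> b" "b \<le> B" and "0 \<le> g" "0 \<le> \<eta>" "0 \<le> M" "B * C + \<eta> \<le> K"
    and "- M \<le> s" "- M \<le> e" "- M \<le> i" "\<bar>s\<bar> \<le> C" "\<bar>i\<bar> \<le> C"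
  shows "s \<le> 0 \<Longrightarrow> - (K * M) \<le> - b * s * i"
    and "e \<le> 0 \<Longrightarrow> - (K * M) \<le> b * s * i - \<eta> * e"
    and "i \<le> 0 \<Longrightarrow> - (K * M) \<le> \<eta> * e - g * i"
proof -
  have C: "0 \<le> C" using assms by linarith
  have scaled: "- (B * (M * C)) \<le> b * (x * y)" if "- (M * C) \<le> x * y" for x y
  proof -
    have "- (B * (M * C)) \<le> - (b * (M * C))" using b C \<open>0 \<le> M\<close> by (simp add: mult_right_mono)
    also have "\<dots> \<le> b * (x * y)" using b that by (metis minus_mult_right mult_left_mono)
    finally show ?thesis .
  qed
  have "(B * C + \<eta>) * M \<le> K * M" using assms by (simp add: mult_right_mono)
  moreover have "- (B * (M * C)) \<le> b * (s * i)"
    by (rule scaled, rule mult_ge_neg_if_bounded) (use assms in auto)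
  moreover have "0 \<le> \<eta> * M" "0 \<le> B * (M * C)" using assms C by auto
  moreover have "\<eta> * e \<le> 0" if "e \<le> 0" using that \<open>0 \<le> \<eta>\<close> by (simp add: mult_nonneg_nonpos)
  moreover have "- (\<eta> * M) \<le> \<eta> * e" using mult_left_mono[of "- M" e \<eta>] assms by simp
  moreover have "g * i \<le> 0" if "i \<le> 0" using that \<open>0 \<le> g\<close> by (simp add: mult_nonneg_nonpos)
  moreover have "- (B * (M * C)) \<le> b * (- s * i)" if "s \<le> 0"
    by (rule scaled, rule mult_ge_neg_if_bounded) (use assms that in auto)
  ultimately show "s \<le> 0 \<Longrightarrow> - (K * M) \<le> - b * s * i"
    and "e \<le> 0 \<Longrightarrow> - (K * M) \<le> b * s * i - \<eta> * e"
    and "i \<le> 0 \<Longrightarrow> - (K * M) \<le> \<eta> * e - g * i"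
    by (simp_all add: algebra_simps)
qed

lemma seir_lower_bound_on_window:
  fixes \<beta> \<gamma> S E I :: "real \<Rightarrow> real" and \<eta> B C K M t0 t1 t :: real
  assumes "0 \<le> \<eta>" and \<beta>: "\<forall>t\<ge>0. 0 \<le> \<beta> t \<and> \<beta> t \<le> B" and \<gamma>: "\<forall>t\<ge>0. 0 \<le> \<gamma> t"
    and hS: "\<forall>t\<ge>0. ((\<lambda>s. - \<beta> s * S s * I s) has_integral (S t - S 0)) {0..t}"
    and hE: "\<forall>t\<ge>0. ((\<lambda>s. \<beta> s * S s * I s - \<eta> * E s) has_integral (E t - E 0)) {0..t}"
    and hI: "\<forall>t\<ge>0. ((\<lambda>s. \<eta> * E s - \<gamma> s * I s) has_integral (I t - I 0)) {0..t}"
    and "0 \<le> t0" and C: "\<And>r. r \<in> {t0..t1} \<Longrightarrow> \<bar>S r\<bar> \<le> C \<and> \<bar>I r\<bar> \<le> C"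
    and "B * C + \<eta> \<le> K" "0 \<le> K" "0 \<le> M"
    and M: "\<And>r. r \<in> {t0..t1} \<Longrightarrow> - M \<le> S r \<and> - M \<le> E r \<and> - M \<le> I r"
    and start: "0 \<le> S t0" "0 \<le> E t0" "0 \<le> I t0" and t: "t \<in> {t0..t1}"
  shows "- (K * M * (t - t0)) \<le> S t \<and> - (K * M * (t - t0)) \<le> E t \<and> - (K * M * (t - t0)) \<le> I t"
proof -
  have quasi: "(S r \<le> 0 \<longrightarrow> - (K * M) \<le> - \<beta> r * S r * I r)
      \<and> (E r \<le> 0 \<longrightarrow> - (K * M) \<le> \<beta> r * S r * I r - \<eta> * E r)
      \<and> (I r \<le> 0 \<longrightarrow> - (K * M) \<le> \<eta> * E r - \<gamma> r * I r)" if r: "r \<in> {t0..t1}" for r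
  proof -
    have "0 \<le> \<beta> r" "\<beta> r \<le> B" "0 \<le> \<gamma> r" "\<bar>S r\<bar> \<le> C" "\<bar>I r\<bar> \<le> C"
      using \<beta> \<gamma> C r \<open>0 \<le> t0\<close> by auto
    moreover have "- M \<le> S r" "- M \<le> E r" "- M \<le> I r" using M r by auto
    ultimately show ?thesis
      using seir_field_quasi_positive[of "\<beta> r" B "\<gamma> r" \<eta> M C K "S r" "E r" "I r"]
        \<open>0 \<le> \<eta>\<close> \<open>0 \<le> M\<close> \<open>B * C + \<eta> \<le> K\<close> by blast
  qed
  have "0 \<le> K * M" using \<open>0 \<le> K\<close> \<open>0 \<le> M\<close> by simp
  have "- (K * M * (t - t0)) \<le> S t"
    by (rule integral_equation_lower_bound[OF hS]) (use t \<open>0 \<le> t0\<close> start \<open>0 \<le> K * M\<close> quasi in auto)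
  moreover have "- (K * M * (t - t0)) \<le> E t"
    by (rule integral_equation_lower_bound[OF hE]) (use t \<open>0 \<le> t0\<close> start \<open>0 \<le> K * M\<close> quasi in auto)
  moreover have "- (K * M * (t - t0)) \<le> I t"
    by (rule integral_equation_lower_bound[OF hI]) (use t \<open>0 \<le> t0\<close> start \<open>0 \<le> K * M\<close> quasi in auto)
  ultimately show ?thesis by blast
qed

text \<open>If M bounds the negative parts on the window, they are in fact bounded by K (t1 - t0) M;
  since K (t1 - t0) < 1, the best such M is 0.\<close>
lemma seir_nonneg_on_short_window:
  fixes \<beta> \<gamma> S E I :: "real \<Rightarrow> real" and \<eta> B C K t0 t1 :: real
  assumes "0 \<le> \<eta>" and \<beta>: "\<forall>t\<ge>0. 0 \<le> \<beta> t \<and> \<beta> t \<le> B" and \<gamma>: "\<forall>t\<ge>0. 0 \<le> \<gamma> t"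
    and hS: "\<forall>t\<ge>0. ((\<lambda>s. - \<beta> s * S s * I s) has_integral (S t - S 0)) {0..t}"
    and hE: "\<forall>t\<ge>0. ((\<lambda>s. \<beta> s * S s * I s - \<eta> * E s) has_integral (E t - E 0)) {0..t}"
    and hI: "\<forall>t\<ge>0. ((\<lambda>s. \<eta> * E s - \<gamma> s * I s) has_integral (I t - I 0)) {0..t}"
    and "0 \<le> t0" and C: "\<And>r. r \<in> {t0..t1} \<Longrightarrow> \<bar>S r\<bar> \<le> C \<and> \<bar>I r\<bar> \<le> C"
    and "B * C + \<eta> \<le> K" "K * (t1 - t0) < 1"
    and start: "0 \<le> S t0" "0 \<le> E t0" "0 \<le> I t0"
  shows "\<forall>r\<in>{t0..t1}. 0 \<le> S r \<and> 0 \<le> E r \<and> 0 \<le> I r"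
proof (cases "t0 \<le> t1")
  case True
  define m where "m r = max 0 (max (- S r) (max (- E r) (- I r)))" for r
  have m_le: "m r \<le> M \<longleftrightarrow> 0 \<le> M \<and> - M \<le> S r \<and> - M \<le> E r \<and> - M \<le> I r" for r M
    by (auto simp: m_def)
  have "0 \<le> C" using C[of t0] True by auto
  moreover have "0 \<le> B" using \<beta>[rule_format, of 0] by simp
  ultimately have "0 \<le> K" using \<open>0 \<le> \<eta>\<close> \<open>B * C + \<eta> \<le> K\<close> by (smt (verit) mult_nonneg_nonneg)
  have "\<forall>r\<in>{t0..t1}. m r \<le> 0"
  proof (rule nonpos_if_bounds_contract[OF _ \<open>K * (t1 - t0) < 1\<close>])
    have "{t0..t1} \<subseteq> {0..t1}" using \<open>0 \<le> t0\<close> by auto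
    then have "continuous_on {t0..t1} S" "continuous_on {t0..t1} E" "continuous_on {t0..t1} I"
      using continuous_on_subset continuous_on_integral_equation[OF hS, of t1]
        continuous_on_integral_equation[OF hE, of t1] continuous_on_integral_equation[OF hI, of t1]
      by blast+
    then have "continuous_on {t0..t1} m"
      unfolding m_def by (intro continuous_intros)
    then show "bdd_above (m ` {t0..t1})"
      by (intro bounded_imp_bdd_above compact_imp_bounded compact_continuous_image compact_Icc)
    fix M :: real assume "0 \<le> M" and M: "\<forall>r\<in>{t0..t1}. m r \<le> M"
    show "\<forall>t\<in>{t0..t1}. m t \<le> K * (t1 - t0) * M"
    proof
      fix t assume t: "t \<in> {t0..t1}"
      have "0 \<le> K * M * (t - t0)" "K * M * (t - t0) \<le> K * (t1 - t0) * M"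
        using mult_left_mono[of "t - t0" "t1 - t0" "K * M"] t \<open>0 \<le> K\<close> \<open>0 \<le> M\<close>
        by (simp_all add: ac_simps)
      moreover have "- (K * M * (t - t0)) \<le> S t \<and> - (K * M * (t - t0)) \<le> E t
          \<and> - (K * M * (t - t0)) \<le> I t"
        by (rule seir_lower_bound_on_window[OF \<open>0 \<le> \<eta>\<close> \<beta> \<gamma> hS hE hI \<open>0 \<le> t0\<close> C
              \<open>B * C + \<eta> \<le> K\<close> \<open>0 \<le> K\<close> \<open>0 \<le> M\<close> _ start t])
          (use M m_le in auto)
      ultimately show "m t \<le> K * (t1 - t0) * M"
        unfolding m_le by linarith
    qed
  qed
  then show ?thesis using m_le[of _ 0] by auto
qed simp

lemma seir_integral_equations_nonneg:
  fixes \<beta> \<gamma> S E I :: "real \<Rightarrow> real" and \<eta> B T :: real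
  assumes "0 \<le> \<eta>" and \<beta>: "\<forall>t\<ge>0. 0 \<le> \<beta> t \<and> \<beta> t \<le> B" and \<gamma>: "\<forall>t\<ge>0. 0 \<le> \<gamma> t"
    and init: "0 \<le> S 0" "0 \<le> E 0" "0 \<le> I 0"
    and hS: "\<forall>t\<ge>0. ((\<lambda>s. - \<beta> s * S s * I s) has_integral (S t - S 0)) {0..t}"
    and hE: "\<forall>t\<ge>0. ((\<lambda>s. \<beta> s * S s * I s - \<eta> * E s) has_integral (E t - E 0)) {0..t}"
    and hI: "\<forall>t\<ge>0. ((\<lambda>s. \<eta> * E s - \<gamma> s * I s) has_integral (I t - I 0)) {0..t}"
    and "0 \<le> T"
  shows "0 \<le> S T \<and> 0 \<le> E T \<and> 0 \<le> I T"
proof -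
  have "compact ((\<lambda>r. max \<bar>S r\<bar> \<bar>I r\<bar>) ` {0..T})"
    using continuous_on_integral_equation[OF hS] continuous_on_integral_equation[OF hI]
    by (intro compact_continuous_image continuous_intros compact_Icc)
  then obtain C where "\<forall>x \<in> (\<lambda>r. max \<bar>S r\<bar> \<bar>I r\<bar>) ` {0..T}. \<bar>x\<bar> \<le> C"
    using compact_imp_bounded bounded_real by metis
  then have C: "\<bar>S r\<bar> \<le> C \<and> \<bar>I r\<bar> \<le> C" if "r \<in> {0..T}" for r
    using that by force
  define K where "K = B * C + \<eta> + 1"
  define h where "h = 1 / (2 * K)"
  have "0 \<le> C" using C[of 0] \<open>0 \<le> T\<close> by auto
  moreover have "0 \<le> B" using \<beta>[rule_format, of 0] by simp
  ultimately have "0 \<le> B * C + \<eta>" using \<open>0 \<le> \<eta>\<close> by simp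
  then have "0 < K" by (simp add: K_def)
  then have "0 < h" "K * h < 1" by (simp_all add: h_def)
  have "\<forall>r\<in>{0..T}. 0 \<le> S r \<and> 0 \<le> E r \<and> 0 \<le> I r"
  proof (rule atLeastAtMost_induct_steps[OF \<open>0 < h\<close>])
    fix t0 assume t0: "0 \<le> t0" "t0 \<le> T" and before: "\<forall>r\<in>{0..t0}. 0 \<le> S r \<and> 0 \<le> E r \<and> 0 \<le> I r"
    define t1 where "t1 = min (t0 + h) T"
    have "t1 - t0 \<le> h" by (simp add: t1_def)
    then have "K * (t1 - t0) < 1"
      using mult_left_mono[OF _ less_imp_le[OF \<open>0 < K\<close>]] \<open>K * h < 1\<close> by (meson le_less_trans)
    then have "\<forall>r\<in>{t0..t1}. 0 \<le> S r \<and> 0 \<le> E r \<and> 0 \<le> I r"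
      using seir_nonneg_on_short_window[OF \<open>0 \<le> \<eta>\<close> \<beta> \<gamma> hS hE hI \<open>0 \<le> t0\<close>, of t1 C K]
        C before t0 by (simp add: K_def t1_def)
    with before show "\<forall>r\<in>{0..t1}. 0 \<le> S r \<and> 0 \<le> E r \<and> 0 \<le> I r"
      by (metis atLeastAtMost_iff linorder_le_cases)
  qed (use init in simp)
  then show ?thesis using \<open>0 \<le> T\<close> by simp
qed

lemma lipschitz_window_integral_lower_bound:
  fixes f w :: "real \<Rightarrow> real"
  assumes lip: "L-lipschitz_on {0..} f" and "0 \<le> t" "0 \<le> d" "0 \<le> c"
    and w: "(w has_integral v) {t..t + d}" and fw: "\<And>r. r \<in> {t..t + d} \<Longrightarrow> c * f r \<le> w r"
  shows "c * (f t - L * d) * d \<le> v"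
proof (rule has_integral_le[OF _ w])
  show "((\<lambda>_. c * (f t - L * d)) has_integral c * (f t - L * d) * d) {t..t + d}"
    using has_integral_const_real[of "c * (f t - L * d)" t "t + d"] \<open>0 \<le> d\<close>
    by (simp add: mult.commute)
  fix r assume r: "r \<in> {t..t + d}"
  have "dist (f r) (f t) \<le> L * dist r t"
    using lipschitz_onD[OF lip, of r t] r \<open>0 \<le> t\<close> by simp
  moreover have "L * dist r t \<le> L * d"
    using r lipschitz_on_nonneg[OF lip] by (auto simp: dist_real_def intro: mult_left_mono)
  ultimately have "f t - L * d \<le> f r" by (simp add: dist_real_def abs_le_iff)
  then have "c * (f t - L * d) \<le> c * f r" using \<open>0 \<le> c\<close> by (rule mult_left_mono)
  also have "\<dots> \<le> w r" using fw r by simp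
  finally show "c * (f t - L * d) \<le> w r" .
qed

text \<open>Barbalat's argument: if f exceeded e at arbitrarily late times, Lipschitz continuity would
  keep it above e/2 on windows of fixed length, each consuming a fixed amount of the nonincreasing,
  bounded below quantity V.\<close>
lemma barbalat_tendsto_zero:
  fixes f w V :: "real \<Rightarrow> real"
  assumes lip: "L-lipschitz_on {0..} f" and f: "\<And>t. 0 \<le> t \<Longrightarrow> 0 \<le> f t"
    and "0 < c" and fw: "\<And>t. 0 \<le> t \<Longrightarrow> c * f t \<le> w t"
    and V: "\<And>t. 0 \<le> t \<Longrightarrow> 0 \<le> V t"
    and w: "\<forall>t\<ge>0. (w has_integral (V 0 - V t)) {0..t}"
  shows "(f \<longlongrightarrow> 0) at_top"
proof -
  have w': "\<forall>t\<ge>0. (w has_integral (- V t - - V 0)) {0..t}" using w by simp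
  have w_increment: "(w has_integral (V s - V t)) {s..t}" if "0 \<le> s" "s \<le> t" for s t
    using has_integral_increment[OF w' that] by simp
  have w_nonneg: "0 \<le> w t" if "0 \<le> t" for t
    using mult_nonneg_nonneg[of c "f t"] f[OF that] fw[OF that] \<open>0 < c\<close> by linarith
  have V_antimono: "V t \<le> V s" if "0 \<le> s" "s \<le> t" for s t
  proof -
    have "0 \<le> V s - V t"
      by (rule has_integral_nonneg[OF w_increment[OF that]]) (use w_nonneg that in auto)
    then show ?thesis by simp
  qed
  define g where "g = Inf (V ` {0..})"
  have g: "g \<le> V t" if "0 \<le> t" for t
    unfolding g_def using V that by (intro cInf_lower bdd_belowI2[where m = 0]) auto
  have "0 \<le> L" using lip by (rule lipschitz_on_nonneg)
  show ?thesis
    unfolding tendsto_iff eventually_at_top_linorder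
  proof (intro allI impI)
    fix e :: real assume "0 < e"
    define d where "d = e / (4 * (L + 1))"
    have "0 < d" using \<open>0 < e\<close> \<open>0 \<le> L\<close> by (simp add: d_def)
    have "L * d \<le> e / 4"
      using \<open>0 < e\<close> \<open>0 \<le> L\<close> by (simp add: d_def field_simps)
    have "Inf (V ` {0..}) < g + c * d * e / 2"
      using \<open>0 < c\<close> \<open>0 < d\<close> \<open>0 < e\<close> by (simp add: g_def)
    then obtain T where T: "0 \<le> T" "V T < g + c * d * e / 2"
      using cInf_lessD[of "V ` {0..}"] by auto
    show "\<exists>N. \<forall>t\<ge>N. dist (f t) 0 < e"
    proof (intro exI allI impI)
      fix t assume "T \<le> t"
      then have "0 \<le> t" using T by simp
      have "c * (f t - L * d) * d \<le> V t - V (t + d)"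
        using lipschitz_window_integral_lower_bound[OF lip \<open>0 \<le> t\<close> _ _ w_increment fw]
          \<open>0 \<le> t\<close> \<open>0 < d\<close> \<open>0 < c\<close> by simp
      also have "\<dots> \<le> V T - g"
        using V_antimono[OF T(1) \<open>T \<le> t\<close>] g[of "t + d"] \<open>0 \<le> t\<close> \<open>0 < d\<close> by simp
      also have "\<dots> < (c * d) * (e / 2)" using T by simp
      finally have "(c * d) * (f t - L * d) < (c * d) * (e / 2)"
        by (simp add: mult.commute mult.left_commute)
      then have "f t - L * d < e / 2"
        using mult_less_cancel_left_pos[of "c * d"] \<open>0 < c\<close> \<open>0 < d\<close> by simp
      then show "dist (f t) 0 < e"
        using f[OF \<open>0 \<le> t\<close>] \<open>L * d \<le> e / 4\<close> \<open>0 < e\<close> by simp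
    qed
  qed
qed

lemma seir_solD:
  assumes "seir_sol \<eta> \<beta> \<gamma> x0 S E I"
  shows "x0 = (S 0, E 0, I 0)"
    and "\<forall>t\<ge>0. ((\<lambda>s. - \<beta> s * S s * I s) has_integral (S t - S 0)) {0..t}"
    and "\<forall>t\<ge>0. ((\<lambda>s. \<beta> s * S s * I s - \<eta> * E s) has_integral (E t - E 0)) {0..t}"
    and "\<forall>t\<ge>0. ((\<lambda>s. \<eta> * E s - \<gamma> s * I s) has_integral (I t - I 0)) {0..t}"
  using assms unfolding seir_sol_def by auto

lemma seir_sol_dissipation:
  assumes "seir_sol \<eta> \<beta> \<gamma> x0 S E I" and "0 \<le> t"
  shows "((\<lambda>s. \<eta> * E s) has_integral ((S 0 + E 0) - (S t + E t))) {0..t}"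
    and "((\<lambda>s. \<gamma> s * I s) has_integral ((S 0 + E 0 + I 0) - (S t + E t + I t))) {0..t}"
proof -
  note eqs = seir_solD(2-4)[OF assms(1), rule_format]
  have "((\<lambda>s. - (- \<beta> s * S s * I s + (\<beta> s * S s * I s - \<eta> * E s))) has_integral
      - ((S t - S 0) + (E t - E 0))) {0..t}"
    using eqs \<open>0 \<le> t\<close> by (intro has_integral_neg has_integral_add)
  then show "((\<lambda>s. \<eta> * E s) has_integral ((S 0 + E 0) - (S t + E t))) {0..t}"
    by (simp add: algebra_simps)
  have "((\<lambda>s. - (- \<beta> s * S s * I s + (\<beta> s * S s * I s - \<eta> * E s) + (\<eta> * E s - \<gamma> s * I s)))
      has_integral - ((S t - S 0) + (E t - E 0) + (I t - I 0))) {0..t}"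
    using eqs \<open>0 \<le> t\<close> by (intro has_integral_neg has_integral_add)
  then show "((\<lambda>s. \<gamma> s * I s) has_integral ((S 0 + E 0 + I 0) - (S t + E t + I t))) {0..t}"
    by (simp add: algebra_simps)
qed

lemma seir_sol_in_PiSet:
  assumes "0 \<le> \<eta>" and sol: "seir_sol \<eta> \<beta> \<gamma> x0 S E I" and "x0 \<in> PiSet"
    and \<beta>: "\<forall>t\<ge>0. 0 \<le> \<beta> t \<and> \<beta> t \<le> B" and \<gamma>: "\<forall>t\<ge>0. 0 \<le> \<gamma> t" and "0 \<le> t"
  shows "(S t, E t, I t) \<in> PiSet"
proof -
  have init: "0 \<le> S 0" "0 \<le> E 0" "0 \<le> I 0" "S 0 + E 0 + I 0 \<le> 1"
    using \<open>x0 \<in> PiSet\<close> seir_solD(1)[OF sol] by (auto simp: PiSet_def)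
  have nonneg: "0 \<le> S r \<and> 0 \<le> E r \<and> 0 \<le> I r" if "0 \<le> r" for r
    using seir_integral_equations_nonneg[OF \<open>0 \<le> \<eta>\<close> \<beta> \<gamma> init(1-3) seir_solD(2-4)[OF sol] that] .
  have "0 \<le> (S 0 + E 0 + I 0) - (S t + E t + I t)"
    by (rule has_integral_nonneg[OF seir_sol_dissipation(2)[OF sol \<open>0 \<le> t\<close>]])
      (use \<gamma> nonneg in auto)
  then show ?thesis
    using nonneg[OF \<open>0 \<le> t\<close>] init(4) by (auto simp: PiSet_def)
qed

lemma seir_rates_bounded:
  fixes b g s e i \<eta> B \<Gamma> :: real
  assumes "(s, e, i) \<in> PiSet" and "0 \<le> b" "b \<le> B" "0 \<le> g" "g \<le> \<Gamma>" "0 \<le> \<eta>"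
  shows "\<bar>b * s * i - \<eta> * e\<bar> \<le> B + \<eta>" and "\<bar>\<eta> * e - g * i\<bar> \<le> \<eta> + \<Gamma>"
proof -
  have sei: "0 \<le> s" "s \<le> 1" "0 \<le> e" "e \<le> 1" "0 \<le> i" "i \<le> 1"
    using assms(1) by (auto simp: PiSet_def)
  then have "0 \<le> s * i" "s * i \<le> 1" by (auto simp: mult_le_one)
  then have "0 \<le> b * (s * i)" "b * (s * i) \<le> B * 1"
    using mult_mono[of b B "s * i" 1] assms by auto
  moreover have "0 \<le> \<eta> * e" "\<eta> * e \<le> \<eta> * 1"
    using sei \<open>0 \<le> \<eta>\<close> mult_left_mono[of e 1 \<eta>] by auto
  moreover have "0 \<le> g * i" "g * i \<le> \<Gamma> * 1"
    using sei assms mult_mono[of g \<Gamma> i 1] by auto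
  ultimately show "\<bar>b * s * i - \<eta> * e\<bar> \<le> B + \<eta>" and "\<bar>\<eta> * e - g * i\<bar> \<le> \<eta> + \<Gamma>"
    unfolding abs_le_iff mult.assoc by linarith+
qed

lemma seir_sol_tendsto_zero:
  fixes \<eta> B c \<Gamma> :: real
  assumes "0 < \<eta>" and sol: "seir_sol \<eta> \<beta> \<gamma> x0 S E I" and "x0 \<in> PiSet"
    and \<beta>: "\<forall>t\<ge>0. 0 \<le> \<beta> t \<and> \<beta> t \<le> B" and \<gamma>: "\<forall>t\<ge>0. c \<le> \<gamma> t \<and> \<gamma> t \<le> \<Gamma>" and "0 < c"
  shows "(E \<longlongrightarrow> 0) at_top" and "(I \<longlongrightarrow> 0) at_top"
proof -
  have \<gamma>t: "c \<le> \<gamma> t" "0 \<le> \<gamma> t" "\<gamma> t \<le> \<Gamma>" if "0 \<le> t" for t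
    using \<gamma> \<open>0 < c\<close> that by auto
  then have "\<forall>t\<ge>0. 0 \<le> \<gamma> t" by blast
  note invariant = seir_sol_in_PiSet[OF less_imp_le[OF \<open>0 < \<eta>\<close>] sol \<open>x0 \<in> PiSet\<close> \<beta> this]
  have SEI: "0 \<le> S t" "0 \<le> E t" "0 \<le> I t" if "0 \<le> t" for t
    using invariant[OF that] by (auto simp: PiSet_def)
  have rates: "\<bar>\<beta> t * S t * I t - \<eta> * E t\<bar> \<le> B + \<eta>" "\<bar>\<eta> * E t - \<gamma> t * I t\<bar> \<le> \<eta> + \<Gamma>"
    if "0 \<le> t" for t
  proof -
    have "0 \<le> \<beta> t" "\<beta> t \<le> B" using \<beta> that by auto
    from seir_rates_bounded[OF invariant[OF that] this \<gamma>t(2,3)[OF that] less_imp_le[OF \<open>0 < \<eta>\<close>]]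
    show "\<bar>\<beta> t * S t * I t - \<eta> * E t\<bar> \<le> B + \<eta>" "\<bar>\<eta> * E t - \<gamma> t * I t\<bar> \<le> \<eta> + \<Gamma>" .
  qed
  show "(E \<longlongrightarrow> 0) at_top"
  proof (rule barbalat_tendsto_zero[where c = \<eta> and w = "\<lambda>t. \<eta> * E t" and V = "\<lambda>t. S t + E t"])
    show "(B + \<eta>)-lipschitz_on {0..} E"
      by (rule lipschitz_on_integral_equation[OF seir_solD(3)[OF sol] rates(1)])
        (simp_all add: order_trans[OF abs_ge_zero rates(1)[OF order_refl]])
    show "\<forall>t\<ge>0. ((\<lambda>t. \<eta> * E t) has_integral (S 0 + E 0) - (S t + E t)) {0..t}"
      using seir_sol_dissipation(1)[OF sol] by blast
  qed (use SEI \<open>0 < \<eta>\<close> in auto)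
  show "(I \<longlongrightarrow> 0) at_top"
  proof (rule barbalat_tendsto_zero[where c = c and w = "\<lambda>t. \<gamma> t * I t" and V = "\<lambda>t. S t + E t + I t"])
    show "(\<eta> + \<Gamma>)-lipschitz_on {0..} I"
      by (rule lipschitz_on_integral_equation[OF seir_solD(4)[OF sol] rates(2)])
        (simp_all add: order_trans[OF abs_ge_zero rates(2)[OF order_refl]])
    show "\<forall>t\<ge>0. ((\<lambda>t. \<gamma> t * I t) has_integral (S 0 + E 0 + I 0) - (S t + E t + I t)) {0..t}"
      using seir_sol_dissipation(2)[OF sol] by blast
  qed (use SEI \<gamma>t \<open>0 < c\<close> in \<open>simp_all add: mult_right_mono\<close>)
qed

theorem lemma1:
  fixes \<eta> bmin bnom gnom gmax Imax :: real
  assumes "\<eta> > 0" and "0 < bmin" and "bmin \<le> bnom" and "0 < gnom" and "gnom \<le> gmax"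
    and "0 < Imax" and "Imax < 1"
  shows
   "(\<forall>x0 \<in> PiSet. \<forall>(\<beta>,\<gamma>) \<in> controls bmin bnom gnom gmax. \<forall>S E I.
       seir_sol \<eta> \<beta> \<gamma> x0 S E I \<longrightarrow>
         (E \<longlongrightarrow> 0) at_top \<and> (I \<longlongrightarrow> 0) at_top \<and>
         ((\<lambda>t. S t + (1 - S t - E t - I t)) \<longlongrightarrow> 1) at_top)
  \<and> (\<forall>x0 \<in> admissible_set \<eta> bmin bnom gnom gmax Imax.
       \<exists>(\<beta>,\<gamma>) \<in> controls bmin bnom gnom gmax. \<forall>S E I.
         seir_sol \<eta> \<beta> \<gamma> x0 S E I \<longrightarrow>
           (E \<longlongrightarrow> 0) at_top \<and> (I \<longlongrightarrow> 0) at_top \<and> (\<forall>t\<ge>0. I t \<le> Imax))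
  \<and> (\<forall>x0 \<in> mrpi_set \<eta> bmin bnom gnom gmax Imax.
       \<forall>(\<beta>,\<gamma>) \<in> controls bmin bnom gnom gmax. \<forall>S E I.
         seir_sol \<eta> \<beta> \<gamma> x0 S E I \<longrightarrow>
           (E \<longlongrightarrow> 0) at_top \<and> (I \<longlongrightarrow> 0) at_top \<and> (\<forall>t\<ge>0. I t \<le> Imax))"
proof -
  have extinction: "(E \<longlongrightarrow> 0) at_top \<and> (I \<longlongrightarrow> 0) at_top"
    if "x0 \<in> PiSet" "(\<beta>, \<gamma>) \<in> controls bmin bnom gnom gmax" "seir_sol \<eta> \<beta> \<gamma> x0 S E I"
    for x0 \<beta> \<gamma> S E I
  proof -
    have "\<forall>t\<ge>0. 0 \<le> \<beta> t \<and> \<beta> t \<le> bnom" "\<forall>t\<ge>0. gnom \<le> \<gamma> t \<and> \<gamma> t \<le> gmax"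
      using that(2) \<open>0 < bmin\<close> by (auto simp: controls_def)
    then show ?thesis
      using seir_sol_tendsto_zero[OF \<open>\<eta> > 0\<close> that(3,1)] \<open>0 < gnom\<close> by blast
  qed
  have removed: "((\<lambda>t. S t + (1 - S t - E t - I t)) \<longlongrightarrow> 1) at_top"
    if "(E \<longlongrightarrow> 0) at_top" "(I \<longlongrightarrow> 0) at_top" for S E I :: "real \<Rightarrow> real"
  proof -
    have "((\<lambda>t. 1 - E t - I t) \<longlongrightarrow> 1 - 0 - 0) at_top"
      by (intro tendsto_diff tendsto_const that)
    moreover have "(\<lambda>t. S t + (1 - S t - E t - I t)) = (\<lambda>t. 1 - E t - I t)" by auto
    ultimately show ?thesis by simp
  qed
  have GPi: "GPi Imax \<subseteq> PiSet" "\<And>S E I. (S, E, I) \<in> GPi Imax \<Longrightarrow> I \<le> Imax"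
    by (auto simp: GPi_def)
  show ?thesis
    unfolding admissible_set_def mrpi_set_def
    apply (intro conjI)
    subgoal using extinction removed by blast
    subgoal using extinction GPi by blast
    subgoal using extinction GPi by blast
    done
qed

end
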